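(* Let $C_1,C_2$ be Archimedean $d$-copulas with strict generators $\phi_1,\phi_2$, respectively. If there exists $\varepsilon>0$ such that $\phi_1/\phi_2$ is increasing on $(0,\varepsilon)$, then $\phi_1\circ\phi_2^{-1}:[0,\infty)\to[0,\infty)$ is subadditive near $\infty$.
   Context: A generator is a continuous, strictly decreasing function $\phi:[0,1]\to[0,\infty]$ with $\phi(1)=0$; it is strict if $\lim_{s\searrow0}\phi(s)=\infty$, in which case $\phi$ is a bijection $(0,1]\to[0,\infty)$ with inverse $\phi^{-1}$. A $d$-copula $C$ is Archimedean with strict generator $\phi$ if $C(\boldsymbol u)=\phi^{-1}(\sum_{k=1}^d\phi(u_k))$. A function $f:[0,\infty)\to[0,\infty)$ is subadditive near $\infty$ if there is $M\ge0$ with $f(x+y)\le f(x)+f(y)$ for all $x,y\in[M,\infty)$. *)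

theory Defs
  imports "HOL-Analysis.Analysis" "HOL-Library.Extended_Real"
begin

definition generator :: "(real \<Rightarrow> ereal) \<Rightarrow> bool" where
  "generator \<phi> \<longleftrightarrow>
     continuous_on {0..1} \<phi> \<and>
     (\<forall>x y. 0 \<le> x \<longrightarrow> x < y \<longrightarrow> y \<le> 1 \<longrightarrow> \<phi> y < \<phi> x) \<and>
     (\<forall>x\<in>{0..1}. 0 \<le> \<phi> x) \<and>
     \<phi> 1 = 0"

definition strict_generator :: "(real \<Rightarrow> ereal) \<Rightarrow> bool" where
  "strict_generator \<phi> \<longleftrightarrow> generator \<phi> \<and> (\<phi> \<longlongrightarrow> \<infinity>) (at_right 0)"

definition gen_inv :: "(real \<Rightarrow> ereal) \<Rightarrow> ereal \<Rightarrow> real" where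
  "gen_inv \<phi> t = (THE s. s \<in> {0..1} \<and> \<phi> s = t)"

text \<open>d-copulas; points of [0,1]^d are functions nat \<Rightarrow> real, only the
  coordinates k < d being relevant.\<close>
definition in_unit_cube :: "nat \<Rightarrow> (nat \<Rightarrow> real) \<Rightarrow> bool" where
  "in_unit_cube d u \<longleftrightarrow> (\<forall>k<d. 0 \<le> u k \<and> u k \<le> 1)"

definition is_copula :: "nat \<Rightarrow> ((nat \<Rightarrow> real) \<Rightarrow> real) \<Rightarrow> bool" where
  "is_copula d C \<longleftrightarrow>
     (\<forall>u. in_unit_cube d u \<longrightarrow> 0 \<le> C u \<and> C u \<le> 1) \<and>
     (\<forall>u. in_unit_cube d u \<longrightarrow> (\<exists>k<d. u k = 0) \<longrightarrow> C u = 0) \<and>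
     (\<forall>u k. in_unit_cube d u \<longrightarrow> k < d \<longrightarrow> (\<forall>j<d. j \<noteq> k \<longrightarrow> u j = 1) \<longrightarrow> C u = u k) \<and>
     (\<forall>a b. in_unit_cube d a \<longrightarrow> in_unit_cube d b \<longrightarrow> (\<forall>k<d. a k \<le> b k) \<longrightarrow>
        0 \<le> (\<Sum>S\<in>Pow {..<d}. (-1) ^ card S * C (\<lambda>k. if k \<in> S then a k else b k)))"

definition archimedean_copula ::
  "nat \<Rightarrow> ((nat \<Rightarrow> real) \<Rightarrow> real) \<Rightarrow> (real \<Rightarrow> ereal) \<Rightarrow> bool" where
  "archimedean_copula d C \<phi> \<longleftrightarrow>
     is_copula d C \<and> strict_generator \<phi> \<and>
     (\<forall>u. in_unit_cube d u \<longrightarrow> C u = gen_inv \<phi> (\<Sum>k<d. \<phi> (u k)))"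

definition subadditive_near_infinity :: "(real \<Rightarrow> real) \<Rightarrow> bool" where
  "subadditive_near_infinity f \<longleftrightarrow>
     (\<exists>M\<ge>0. \<forall>x y. M \<le> x \<longrightarrow> M \<le> y \<longrightarrow> f (x + y) \<le> f x + f y)"

end

theory Submission
  imports Defs
begin

text \<open>Put \<open>f = \<phi>\<^sub>1 \<circ> \<phi>\<^sub>2\<^sup>-\<^sup>1\<close>. Writing \<open>x = \<phi>\<^sub>2 s\<close> gives \<open>f x / x = \<phi>\<^sub>1 s / \<phi>\<^sub>2 s\<close>, and
  \<open>s = \<phi>\<^sub>2\<^sup>-\<^sup>1 x\<close> decreases to \<open>0\<close> as \<open>x\<close> grows. Hence \<open>f x / x\<close> is decreasing for large
  \<open>x\<close>, and any such function is subadditive there: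
  \<open>f (x + y) = x f(x+y)/(x+y) + y f(x+y)/(x+y) \<le> f x + f y\<close>.\<close>

lemma subadditive_near_infinity_if_ratio_antimono:
  fixes f :: "real \<Rightarrow> real"
  assumes "M > 0"
    and antimono: "\<And>x y. M \<le> x \<Longrightarrow> x \<le> y \<Longrightarrow> f y / y \<le> f x / x"
  shows "subadditive_near_infinity f"
  unfolding subadditive_near_infinity_def
proof (intro exI[of _ M] conjI allI impI)
  fix x y assume xy: "M \<le> x" "M \<le> y"
  with \<open>M > 0\<close> have pos: "x > 0" "y > 0" by auto
  have "f (x + y) = x * (f (x + y) / (x + y)) + y * (f (x + y) / (x + y))"
    using pos by (subst distrib_right[symmetric]) simp
  also have "\<dots> \<le> x * (f x / x) + y * (f y / y)"
    using antimono[of x "x + y"] antimono[of y "x + y"] xy pos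
    by (intro add_mono mult_left_mono) auto
  also have "\<dots> = f x + f y"
    using pos by simp
  finally show "f (x + y) \<le> f x + f y" .
qed (use \<open>M > 0\<close> in simp)

lemma generator_less:
  assumes "generator \<phi>" "0 \<le> x" "x < y" "y \<le> 1"
  shows "\<phi> y < \<phi> x"
  using assms unfolding generator_def by auto

lemma generator_finite:
  assumes "generator \<phi>" "0 < s" "s \<le> 1"
  shows "\<phi> s = ereal (real_of_ereal (\<phi> s))"
proof -
  have "0 \<le> \<phi> s" "\<phi> s < \<phi> (s / 2)"
    using assms generator_less[of \<phi> "s / 2" s] unfolding generator_def by auto
  then show ?thesis
    by (cases "\<phi> s") auto
qed

lemma generator_pos:
  assumes "generator \<phi>" "0 \<le> s" "s < 1"
  shows "0 < \<phi> s"
  using generator_less[OF assms] assms(1) unfolding generator_def by auto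

lemma gen_inv_eqI:
  assumes "generator \<phi>" "s \<in> {0..1}" "\<phi> s = t"
  shows "gen_inv \<phi> t = s"
  unfolding gen_inv_def
proof (rule the_equality)
  fix r assume r: "r \<in> {0..1} \<and> \<phi> r = t"
  show "r = s"
    using generator_less[OF assms(1), of r s] generator_less[OF assms(1), of s r] r assms
    by (cases r s rule: linorder_cases) auto
qed (use assms in auto)

lemma strict_generator_surj:
  assumes sg: "strict_generator \<phi>" and "0 \<le> x"
  obtains s where "0 < s" "s \<le> 1" "\<phi> s = ereal x"
proof -
  have g: "generator \<phi>" and lim: "(\<phi> \<longlongrightarrow> \<infinity>) (at_right 0)"
    using sg unfolding strict_generator_def by auto
  have "eventually (\<lambda>t. ereal x < \<phi> t) (at_right (0::real))"
    using order_tendstoD(1)[OF lim, of "ereal x"] by simp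
  then obtain b where "b > 0" and b: "\<And>t. 0 < t \<Longrightarrow> t < b \<Longrightarrow> ereal x < \<phi> t"
    unfolding eventually_at_right_field by auto
  define a where "a = min (b / 2) (1 / 2)"
  have a: "0 < a" "a < b" "a \<le> 1"
    using \<open>b > 0\<close> unfolding a_def by auto
  have "continuous_on {a..1} \<phi>"
    using g a unfolding generator_def by (auto intro: continuous_on_subset)
  then have conn: "connected (\<phi> ` {a..1})"
    by (rule connected_continuous_image) simp
  \<comment> \<open>intermediate value theorem between \<open>\<phi> 1 = 0\<close> and \<open>\<phi> a > x\<close>\<close>
  have "\<phi> 1 \<le> ereal x" "ereal x \<le> \<phi> a"
    using g b[of a] a \<open>0 \<le> x\<close> unfolding generator_def by auto
  then have "ereal x \<in> \<phi> ` {a..1}"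
    using connectedD_interval[OF conn, of "\<phi> 1" "\<phi> a" "ereal x"] a by auto
  then obtain s where "s \<in> {a..1}" "ereal x = \<phi> s"
    by (rule imageE)
  with a show ?thesis
    by (intro that[of s]) auto
qed

lemma strict_generator_gen_inv:
  assumes "strict_generator \<phi>" "0 \<le> x"
  shows "0 < gen_inv \<phi> (ereal x)" "gen_inv \<phi> (ereal x) \<le> 1"
    and "\<phi> (gen_inv \<phi> (ereal x)) = ereal x"
proof -
  obtain s where s: "0 < s" "s \<le> 1" "\<phi> s = ereal x"
    using strict_generator_surj[OF assms] .
  moreover have "gen_inv \<phi> (ereal x) = s"
    using assms(1) s by (intro gen_inv_eqI) (auto simp: strict_generator_def)
  ultimately show "0 < gen_inv \<phi> (ereal x)" "gen_inv \<phi> (ereal x) \<le> 1"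
    "\<phi> (gen_inv \<phi> (ereal x)) = ereal x"
    by auto
qed

lemma gen_inv_antimono:
  assumes sg: "strict_generator \<phi>" and "0 \<le> x" "x \<le> y"
  shows "gen_inv \<phi> (ereal y) \<le> gen_inv \<phi> (ereal x)"
proof (rule ccontr)
  assume "\<not> ?thesis"
  then have "\<phi> (gen_inv \<phi> (ereal y)) < \<phi> (gen_inv \<phi> (ereal x))"
    using sg assms strict_generator_gen_inv[of \<phi> x] strict_generator_gen_inv[of \<phi> y]
    by (intro generator_less) (auto simp: strict_generator_def)
  then show False
    using sg assms strict_generator_gen_inv(3)[of \<phi> x] strict_generator_gen_inv(3)[of \<phi> y]
    by auto
qed

theorem mainTheorem13:
  fixes d :: nat and C1 C2 :: "(nat \<Rightarrow> real) \<Rightarrow> real"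
    and \<phi>1 \<phi>2 :: "real \<Rightarrow> ereal"
  assumes "d \<ge> 2"
    and "archimedean_copula d C1 \<phi>1"
    and "archimedean_copula d C2 \<phi>2"
    and "\<exists>\<epsilon>>0. \<forall>s t. 0 < s \<longrightarrow> s \<le> t \<longrightarrow> t < \<epsilon> \<longrightarrow> t < 1 \<longrightarrow>
           real_of_ereal (\<phi>1 s) / real_of_ereal (\<phi>2 s)
             \<le> real_of_ereal (\<phi>1 t) / real_of_ereal (\<phi>2 t)"
  shows "subadditive_near_infinity (\<lambda>x. real_of_ereal (\<phi>1 (gen_inv \<phi>2 (ereal x))))"
proof -
  obtain \<epsilon> where "\<epsilon> > 0" and ratio_mono: "\<And>s t. 0 < s \<Longrightarrow> s \<le> t \<Longrightarrow> t < \<epsilon> \<Longrightarrow> t < 1 \<Longrightarrow>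
      real_of_ereal (\<phi>1 s) / real_of_ereal (\<phi>2 s) \<le> real_of_ereal (\<phi>1 t) / real_of_ereal (\<phi>2 t)"
    using assms(4) by blast
  \<comment> \<open>only strictness of \<open>\<phi>\<^sub>2\<close> is needed\<close>
  have sg: "strict_generator \<phi>2" and g: "generator \<phi>2"
    using assms(3) unfolding archimedean_copula_def strict_generator_def by auto
  define \<delta> where "\<delta> = min \<epsilon> 1 / 2"
  have \<delta>: "0 < \<delta>" "\<delta> < \<epsilon>" "\<delta> < 1"
    using \<open>\<epsilon> > 0\<close> unfolding \<delta>_def by auto
  define M where "M = real_of_ereal (\<phi>2 \<delta>)"
  have \<phi>2_\<delta>: "\<phi>2 \<delta> = ereal M"
    using generator_finite[OF g, of \<delta>] \<delta> unfolding M_def by auto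
  have "M > 0"
    using generator_pos[OF g, of \<delta>] \<delta> \<phi>2_\<delta> by simp
  have "gen_inv \<phi>2 (ereal M) = \<delta>"
    using \<delta> \<phi>2_\<delta> by (intro gen_inv_eqI[OF g]) auto
  \<comment> \<open>beyond \<open>M\<close> the preimages \<open>\<phi>\<^sub>2\<^sup>-\<^sup>1 x\<close> lie in \<open>(0, \<delta>]\<close>, where \<open>\<phi>\<^sub>1/\<phi>\<^sub>2\<close> increases\<close>
  show ?thesis
  proof (rule subadditive_near_infinity_if_ratio_antimono[OF \<open>M > 0\<close>])
    fix x y assume "M \<le> x" "x \<le> y"
    then have "gen_inv \<phi>2 (ereal y) \<le> gen_inv \<phi>2 (ereal x)" "gen_inv \<phi>2 (ereal x) \<le> \<delta>"
      using gen_inv_antimono[OF sg] \<open>M > 0\<close> \<open>gen_inv \<phi>2 (ereal M) = \<delta>\<close> by force+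
    then show "real_of_ereal (\<phi>1 (gen_inv \<phi>2 (ereal y))) / y
        \<le> real_of_ereal (\<phi>1 (gen_inv \<phi>2 (ereal x))) / x"
      using ratio_mono[of "gen_inv \<phi>2 (ereal y)" "gen_inv \<phi>2 (ereal x)"] \<delta>
        \<open>M \<le> x\<close> \<open>x \<le> y\<close> \<open>M > 0\<close>
        strict_generator_gen_inv[OF sg, of x] strict_generator_gen_inv[OF sg, of y]
      by auto
  qed
qed

end
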